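(* Assume $CA_2$. Then there is a first countable $S$-space, i.e. a first countable regular ($T_3$) topological space which is hereditarily separable and not Lindelöf.
   Context: A type is a sequence $\tau=\{(m_k,n_{k+1},r_{k+1})\}_{k\in\omega}$ of natural numbers with $m_0=1$; $n_k\ge2$ for $k\ge1$; every $r\in\omega$ equals $r_k$ for infinitely many $k$; $m_k>r_{k+1}$; and $m_{k+1}=r_{k+1}+(m_k-r_{k+1})n_{k+1}$ for all $k$. For a set of ordinals $X$ and $\mathcal F\subseteq[X]^{<\omega}$, $\mathcal F_k$ is the set of elements of rank $k$ in $(\mathcal F,\subsetneq)$; $A\sqsubseteq B$ means $A\subseteq B$ and every element of $B$ below an element of $A$ is in $A$; $A<B$ means every element of $A$ is below every element of $B$. $\mathcal F$ is a construction scheme over $X$ of type $\tau$ if (1) every finite subset of $X$ lies in a member of $\mathcal F$; (2) $|F|=m_k$ for $F\in\mathcal F_k$; (3) $E\cap F\sqsubseteq E,F$ for $E,F\in\mathcal F_k$; (4) each $F\in\mathcal F_{k+1}$ is the union of uniquely determined $F_0,\dots,F_{n_{k+1}-1}\in\mathcal F_k$ forming a $\Delta$-system with root $R(F)$, $|R(F)|=r_{k+1}$, $R(F)<F_0\setminus R(F)<\dots<F_{n_{k+1}-1}\setminus R(F)$. For a construction scheme $\mathcal F$ over $\omega_1$, $l\ge1$, $F\in\mathcal F_l$ and finite $\mathcal C\subseteq[\omega_1]^{<\omega}$: $F$ captures $\mathcal C$ if $|\mathcal C|\le n_l$ and $\mathcal C$ can be enumerated as $\{c_i\}_{i<|\mathcal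 C|}$ with $c_i\subseteq F_i$, $c_i\setminus R(F)\neq\emptyset$ and $\phi_i[c_0]=c_i$ where $\phi_i:F_0\to F_i$ is the increasing bijection. $\mathcal F$ is $n$-capturing if for every uncountable $S\subseteq[\omega_1]^{<\omega}$ and every $k\in\omega$ there are $\mathcal C\in[S]^n$, $l>k$ and $F\in\mathcal F_l$ capturing $\mathcal C$. $CA_n$ is the statement: for every type $\tau$ with $n\le n_k$ for all $k\ge1$ there is an $n$-capturing construction scheme over $\omega_1$ of type $\tau$. *)

theory Defs
  imports "HOL-Analysis.Analysis"
begin

text \<open>A well-ordered type whose universe is uncountable while all proper initial
segments are countable is order-isomorphic to omega_1.\<close>

definition omega1_type :: "'a::wellorder itself \<Rightarrow> bool" where
  "omega1_type _ \<longleftrightarrow> uncountable (UNIV :: 'a set) \<and> (\<forall>x::'a. countable {y. y < x})"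

text \<open>A type tau = (m_k, n_(k+1), r_(k+1))_k is given by three sequences m, n, r
(the values n 0 and r 0 are irrelevant).\<close>

definition is_type :: "(nat \<Rightarrow> nat) \<Rightarrow> (nat \<Rightarrow> nat) \<Rightarrow> (nat \<Rightarrow> nat) \<Rightarrow> bool" where
  "is_type m n r \<longleftrightarrow>
     m 0 = 1 \<and>
     (\<forall>k\<ge>1. n k \<ge> 2) \<and>
     (\<forall>x. infinite {k. k \<ge> 1 \<and> r k = x}) \<and>
     (\<forall>k. m k > r (Suc k)) \<and>
     (\<forall>k. m (Suc k) = r (Suc k) + (m k - r (Suc k)) * n (Suc k))"

text \<open>rank_ge F k A: A is in F and has rank at least k in the poset (F, proper subset),
i.e. there is a strictly decreasing chain of length k below A inside F.\<close>

fun rank_ge :: "'a set set \<Rightarrow> nat \<Rightarrow> 'a set \<Rightarrow> bool" where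
  "rank_ge \<F> 0 A = (A \<in> \<F>)"
| "rank_ge \<F> (Suc k) A = (A \<in> \<F> \<and> (\<exists>B. rank_ge \<F> k B \<and> B \<subset> A))"

definition level :: "'a set set \<Rightarrow> nat \<Rightarrow> 'a set set" where
  "level \<F> k = {A. rank_ge \<F> k A \<and> \<not> rank_ge \<F> (Suc k) A}"

definition init_seg :: "'a::linorder set \<Rightarrow> 'a set \<Rightarrow> bool" where
  "init_seg A B \<longleftrightarrow> A \<subseteq> B \<and> (\<forall>b\<in>B. \<forall>a\<in>A. b < a \<longrightarrow> b \<in> A)"

definition set_less :: "'a::linorder set \<Rightarrow> 'a set \<Rightarrow> bool" where
  "set_less A B \<longleftrightarrow> (\<forall>a\<in>A. \<forall>b\<in>B. a < b)"

text \<open>decomp F n r k A Fs: the list Fs = [F_0,...,F_(n_(k+1)-1)] of members of F of rank k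
witnesses clause (4) for A (of rank k+1).\<close>

definition decomp ::
  "'a::linorder set set \<Rightarrow> (nat \<Rightarrow> nat) \<Rightarrow> (nat \<Rightarrow> nat) \<Rightarrow> nat \<Rightarrow> 'a set \<Rightarrow> 'a set list \<Rightarrow> bool" where
  "decomp \<F> n r k A Fs \<longleftrightarrow>
     length Fs = n (Suc k) \<and>
     (\<forall>i<length Fs. Fs ! i \<in> level \<F> k) \<and>
     A = \<Union>(set Fs) \<and>
     (\<exists>R. card R = r (Suc k) \<and>
          (\<forall>i<length Fs. \<forall>j<length Fs. i \<noteq> j \<longrightarrow> Fs ! i \<inter> Fs ! j = R) \<and>
          set_less R (Fs ! 0 - R) \<and>
          (\<forall>i. Suc i < length Fs \<longrightarrow> set_less (Fs ! i - R) (Fs ! Suc i - R)))"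

definition construction_scheme ::
  "'a::linorder set \<Rightarrow> (nat \<Rightarrow> nat) \<Rightarrow> (nat \<Rightarrow> nat) \<Rightarrow> (nat \<Rightarrow> nat) \<Rightarrow> 'a set set \<Rightarrow> bool" where
  "construction_scheme X m n r \<F> \<longleftrightarrow>
     (\<forall>F\<in>\<F>. finite F \<and> F \<subseteq> X) \<and>
     (\<forall>A. finite A \<and> A \<subseteq> X \<longrightarrow> (\<exists>F\<in>\<F>. A \<subseteq> F)) \<and>
     (\<forall>k. \<forall>F\<in>level \<F> k. card F = m k) \<and>
     (\<forall>k. \<forall>E\<in>level \<F> k. \<forall>F\<in>level \<F> k. init_seg (E \<inter> F) E \<and> init_seg (E \<inter> F) F) \<and>
     (\<forall>k. \<forall>F\<in>level \<F> (Suc k). \<exists>!Fs. decomp \<F> n r k F Fs)"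

text \<open>The canonical blocks F_0,...,F_(n_l - 1) of F of rank l = Suc k, and its root.\<close>

definition blocks :: "'a::linorder set set \<Rightarrow> (nat \<Rightarrow> nat) \<Rightarrow> (nat \<Rightarrow> nat) \<Rightarrow> nat \<Rightarrow> 'a set \<Rightarrow> 'a set list" where
  "blocks \<F> n r k F = (THE Fs. decomp \<F> n r k F Fs)"

definition root :: "'a::linorder set set \<Rightarrow> (nat \<Rightarrow> nat) \<Rightarrow> (nat \<Rightarrow> nat) \<Rightarrow> nat \<Rightarrow> 'a set \<Rightarrow> 'a set" where
  "root \<F> n r k F = blocks \<F> n r k F ! 0 \<inter> blocks \<F> n r k F ! 1"

definition incr_bij :: "'a::linorder set \<Rightarrow> 'a set \<Rightarrow> 'a \<Rightarrow> 'a" where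
  "incr_bij A B x = sorted_list_of_set B ! card {y\<in>A. y < x}"

definition captures ::
  "'a::linorder set set \<Rightarrow> (nat \<Rightarrow> nat) \<Rightarrow> (nat \<Rightarrow> nat) \<Rightarrow> nat \<Rightarrow> 'a set \<Rightarrow> 'a set set \<Rightarrow> bool" where
  "captures \<F> n r l F \<C> \<longleftrightarrow>
     l \<ge> 1 \<and> F \<in> level \<F> l \<and> finite \<C> \<and> card \<C> \<le> n l \<and>
     (let Fs = blocks \<F> n r (l - 1) F; R = root \<F> n r (l - 1) F in
       \<exists>cs. distinct cs \<and> set cs = \<C> \<and>
         (\<forall>i<length cs. cs ! i \<subseteq> Fs ! i \<and> cs ! i - R \<noteq> {} \<and>
                        incr_bij (Fs ! 0) (Fs ! i) ` (cs ! 0) = cs ! i))"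

definition n_capturing ::
  "nat \<Rightarrow> (nat \<Rightarrow> nat) \<Rightarrow> (nat \<Rightarrow> nat) \<Rightarrow> 'a::linorder set set \<Rightarrow> bool" where
  "n_capturing p n r \<F> \<longleftrightarrow>
     (\<forall>S. S \<subseteq> {A. finite A} \<and> uncountable S \<longrightarrow>
        (\<forall>k. \<exists>\<C> l F. \<C> \<subseteq> S \<and> finite \<C> \<and> card \<C> = p \<and> l > k \<and> F \<in> level \<F> l \<and>
                     captures \<F> n r l F \<C>))"

text \<open>CA_p, with omega_1 represented by the well-ordered type 'a.\<close>

definition CA :: "'a::wellorder itself \<Rightarrow> nat \<Rightarrow> bool" where
  "CA _ p \<longleftrightarrow>
     (\<forall>m n r. is_type m n r \<and> (\<forall>k\<ge>1. p \<le> n k) \<longrightarrow>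
        (\<exists>\<F> :: 'a set set. construction_scheme UNIV m n r \<F> \<and> n_capturing p n r \<F>))"

end

theory Submission
  imports Defs
begin

(* Take a type with n_k = 2 for all k. In a binary construction scheme every point x of a
   member E has a position in E, which descends through the block decompositions of E. Call
   y k-near x if, descending from a common member, the positions of y <= x lie in a common block
   at every level below k until they coincide; coherence of the scheme makes this independent of
   the member. The sets of points k-near x form a base of clopen neighbourhoods of a first
   countable T1 topology on omega_1, and the neighbourhoods of x lie inside the countable set
   of points <= x, so the space is not Lindelof. By 2-capturing, every uncountable set contains
   points y < z with y k-near z (z is the copy of y in the second block of a capturing member).
   Hence in any subspace Y the countably many points not k-near any earlier point of Y, for
   some k, are dense: the space is hereditarily separable. *)

section \<open>S-spaces from neighbourhood systems on omega_1\<close>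

locale omega1_nbhd_system =
  fixes nb :: "nat \<Rightarrow> 'a::wellorder \<Rightarrow> 'a \<Rightarrow> bool"
  assumes omega1: "omega1_type TYPE('a)"
    and nb_refl: "nb k x x"
    and nb_le: "nb k y x \<Longrightarrow> y \<le> x"
    and nb_Suc: "nb (Suc k) y x \<Longrightarrow> nb k y x"
    and nb_separating: "y \<noteq> x \<Longrightarrow> \<exists>k. \<not> nb k y x"
    and nb_open: "nb k y x \<Longrightarrow> \<exists>j. \<forall>w. nb j w y \<longrightarrow> nb k w x"
    and nb_closed: "\<not> nb k y x \<Longrightarrow> \<exists>j. \<forall>w. nb j w y \<longrightarrow> \<not> nb k w x"
    and nb_uncountable: "uncountable Y \<Longrightarrow> \<exists>y\<in>Y. \<exists>z\<in>Y. y < z \<and> nb k y z"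
begin

definition nbhd :: "nat \<Rightarrow> 'a \<Rightarrow> 'a set" where
  "nbhd k x = {y. nb k y x}"

lemma mem_nbhd [simp]: "x \<in> nbhd k x"
  unfolding nbhd_def by (simp add: nb_refl)

lemma nbhd_antimono: "k \<le> j \<Longrightarrow> nbhd j x \<subseteq> nbhd k x"
proof (induction j rule: dec_induct)
  case (step j)
  then show ?case
    unfolding nbhd_def using nb_Suc by blast
qed simp

definition nbhd_topology :: "'a topology" where
  "nbhd_topology = topology (\<lambda>U. \<forall>x\<in>U. \<exists>k. nbhd k x \<subseteq> U)"

lemma openin_nbhd_topology: "openin nbhd_topology U \<longleftrightarrow> (\<forall>x\<in>U. \<exists>k. nbhd k x \<subseteq> U)"
proof -
  have "istopology (\<lambda>U. \<forall>x\<in>U. \<exists>k. nbhd k x \<subseteq> U)"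
    unfolding istopology_def
  proof (intro conjI allI impI ballI)
    fix S T x assume "\<forall>x\<in>S. \<exists>k. nbhd k x \<subseteq> S" "\<forall>x\<in>T. \<exists>k. nbhd k x \<subseteq> T" "x \<in> S \<inter> T"
    then obtain i j where "nbhd i x \<subseteq> S" "nbhd j x \<subseteq> T"
      by blast
    then have "nbhd (max i j) x \<subseteq> S \<inter> T"
      using nbhd_antimono[of i "max i j" x] nbhd_antimono[of j "max i j" x] by auto
    then show "\<exists>k. nbhd k x \<subseteq> S \<inter> T" ..
  next
    fix \<K> x assume "\<forall>U\<in>\<K>. \<forall>x\<in>U. \<exists>k. nbhd k x \<subseteq> U" "x \<in> \<Union>\<K>"
    then obtain U k where "U \<in> \<K>" "nbhd k x \<subseteq> U"
      by blast
    then show "\<exists>k. nbhd k x \<subseteq> \<Union>\<K>"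
      by blast
  qed
  then show ?thesis
    unfolding nbhd_topology_def by simp
qed

lemma topspace_nbhd_topology [simp]: "topspace nbhd_topology = UNIV"
  using openin_subset[of nbhd_topology UNIV] by (auto simp: openin_nbhd_topology)

lemma openin_nbhd: "openin nbhd_topology (nbhd k x)"
  unfolding openin_nbhd_topology
proof
  fix y assume "y \<in> nbhd k x"
  then obtain j where "\<forall>w. nb j w y \<longrightarrow> nb k w x"
    using nb_open unfolding nbhd_def by blast
  then show "\<exists>j. nbhd j y \<subseteq> nbhd k x"
    unfolding nbhd_def by blast
qed

lemma openin_Compl_nbhd: "openin nbhd_topology (- nbhd k x)"
  unfolding openin_nbhd_topology
proof
  fix y assume "y \<in> - nbhd k x"
  then obtain j where "\<forall>w. nb j w y \<longrightarrow> \<not> nb k w x"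
    using nb_closed unfolding nbhd_def by blast
  then show "\<exists>j. nbhd j y \<subseteq> - nbhd k x"
    unfolding nbhd_def by blast
qed

lemma first_countable_nbhd_topology: "first_countable nbhd_topology"
  unfolding first_countable_def
proof
  fix x
  show "\<exists>\<B>. countable \<B> \<and> (\<forall>V\<in>\<B>. openin nbhd_topology V) \<and>
          (\<forall>U. openin nbhd_topology U \<and> x \<in> U \<longrightarrow> (\<exists>V\<in>\<B>. x \<in> V \<and> V \<subseteq> U))"
  proof (intro exI[of _ "range (\<lambda>k. nbhd k x)"] conjI)
    show "\<forall>V\<in>range (\<lambda>k. nbhd k x). openin nbhd_topology V"
      using openin_nbhd by blast
    show "\<forall>U. openin nbhd_topology U \<and> x \<in> U \<longrightarrow> (\<exists>V\<in>range (\<lambda>k. nbhd k x). x \<in> V \<and> V \<subseteq> U)"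
      unfolding openin_nbhd_topology using mem_nbhd by blast
  qed simp
qed

lemma t1_space_nbhd_topology: "t1_space nbhd_topology"
  unfolding t1_space_def
proof (intro ballI impI)
  fix x y :: 'a assume "x \<noteq> y"
  then obtain k where "y \<notin> nbhd k x"
    using nb_separating[of y x] unfolding nbhd_def by auto
  then show "\<exists>U. openin nbhd_topology U \<and> x \<in> U \<and> y \<notin> U"
    using openin_nbhd mem_nbhd by blast
qed

lemma regular_space_nbhd_topology: "regular_space nbhd_topology"
  unfolding regular_space_def
proof (intro allI impI)
  fix C a assume "closedin nbhd_topology C \<and> a \<in> topspace nbhd_topology - C"
  then have "openin nbhd_topology (- C)" "a \<in> - C"
    by (auto simp: closedin_def Compl_eq_Diff_UNIV)
  then obtain k where "nbhd k a \<subseteq> - C"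
    unfolding openin_nbhd_topology by blast
  then show "\<exists>U V. openin nbhd_topology U \<and> openin nbhd_topology V \<and> a \<in> U \<and> C \<subseteq> V \<and> disjnt U V"
    using openin_nbhd[of k a] openin_Compl_nbhd[of k a] mem_nbhd[of a k]
    by (intro exI[of _ "nbhd k a"] exI[of _ "- nbhd k a"]) (auto simp: disjnt_def)
qed

lemma countable_atMost: "countable {..x::'a}"
proof -
  have "{..x} = insert x {y. y < x}"
    by auto
  then show ?thesis
    using omega1 unfolding omega1_type_def by simp
qed

lemma not_Lindelof_space_nbhd_topology: "\<not> Lindelof_space nbhd_topology"
proof
  assume "Lindelof_space nbhd_topology"
  then obtain \<V> where \<V>: "countable \<V>" "\<V> \<subseteq> range (nbhd 0)" "\<Union>\<V> = UNIV"
    using Lindelof_spaceD[of nbhd_topology "range (nbhd 0)"] openin_nbhd by force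
  then obtain A where A: "countable A" "\<V> = nbhd 0 ` A"
    using countable_subset_image[of \<V> "nbhd 0" UNIV] by blast
  have "nbhd 0 x \<subseteq> {..x}" for x
    unfolding nbhd_def by (auto dest: nb_le)
  then have "UNIV \<subseteq> (\<Union>x\<in>A. {..x})"
    using \<V>(3) A(2) by blast
  moreover have "countable (\<Union>x\<in>A. {..x})"
    using A(1) countable_atMost by blast
  ultimately have "countable (UNIV :: 'a set)"
    by (rule countable_subset)
  then show False
    using omega1 unfolding omega1_type_def by simp
qed

definition isolated :: "'a set \<Rightarrow> nat \<Rightarrow> 'a set" where
  "isolated Y k = {z\<in>Y. \<forall>y\<in>Y. y < z \<longrightarrow> \<not> nb k y z}"

lemma countable_isolated: "countable (isolated Y k)"
proof (rule ccontr)
  assume "uncountable (isolated Y k)"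
  then obtain y z where "y \<in> isolated Y k" "z \<in> isolated Y k" "y < z" "nb k y z"
    using nb_uncountable by blast
  then show False
    unfolding isolated_def by blast
qed

lemma mem_closure_isolated:
  "z \<in> Y \<Longrightarrow> z \<in> nbhd_topology closure_of (\<Union>k. isolated Y k)"
proof (induction z rule: less_induct)
  case (less z)
  show ?case
  proof (cases "z \<in> (\<Union>k. isolated Y k)")
    case True
    then show ?thesis
      using closure_of_subset[of "\<Union>k. isolated Y k" nbhd_topology] by auto
  next
    case False
    then have below: "\<exists>y\<in>Y. y < z \<and> nb k y z" for k
      using less.prems unfolding isolated_def by blast
    show ?thesis
      unfolding in_closure_of
    proof (intro conjI allI impI)
      fix T assume T: "z \<in> T \<and> openin nbhd_topology T"
      then obtain k where k: "nbhd k z \<subseteq> T"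
        unfolding openin_nbhd_topology by blast
      obtain y where y: "y \<in> Y" "y < z" "nb k y z"
        using below by blast
      then have "y \<in> nbhd_topology closure_of (\<Union>k. isolated Y k)"
        using less.IH by blast
      moreover have "y \<in> T"
        using k y(3) unfolding nbhd_def by blast
      ultimately show "\<exists>y. y \<in> (\<Union>k. isolated Y k) \<and> y \<in> T"
        using T unfolding in_closure_of by blast
    qed simp
  qed
qed

lemma hereditarily_separable_nbhd_topology: "hereditarily separable_space nbhd_topology"
  unfolding hereditarily_def
proof (intro allI impI)
  fix Y :: "'a set"
  define D where "D = (\<Union>k. isolated Y k)"
  have "countable D"
    unfolding D_def using countable_isolated by auto
  have "D \<subseteq> Y"
    unfolding D_def isolated_def by blast
  moreover have "Y \<subseteq> nbhd_topology closure_of D"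
    unfolding D_def using mem_closure_isolated by blast
  ultimately have "subtopology nbhd_topology Y closure_of D = topspace (subtopology nbhd_topology Y)"
    unfolding closure_of_subtopology by (auto simp: Int_absorb1)
  then show "separable_space (subtopology nbhd_topology Y)"
    unfolding separable_space_def using \<open>countable D\<close> \<open>D \<subseteq> Y\<close> by auto
qed

lemma ex_S_space:
  "\<exists>X :: 'a topology. first_countable X \<and> t1_space X \<and> regular_space X \<and>
     hereditarily separable_space X \<and> \<not> Lindelof_space X"
  using first_countable_nbhd_topology t1_space_nbhd_topology regular_space_nbhd_topology
    hereditarily_separable_nbhd_topology not_Lindelof_space_nbhd_topology by blast

end

section \<open>Positions, ranks and levels\<close>

definition pos :: "'a::linorder set \<Rightarrow> 'a \<Rightarrow> nat" where
  "pos A x = card {y\<in>A. y < x}"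

lemma pos_less_card: "finite A \<Longrightarrow> x \<in> A \<Longrightarrow> pos A x < card A"
  unfolding pos_def by (rule psubset_card_mono) auto

lemma pos_strict_mono: "finite A \<Longrightarrow> x \<in> A \<Longrightarrow> y \<in> A \<Longrightarrow> x < y \<Longrightarrow> pos A x < pos A y"
  unfolding pos_def by (rule psubset_card_mono) auto

lemma pos_le_pos_iff: "finite A \<Longrightarrow> x \<in> A \<Longrightarrow> y \<in> A \<Longrightarrow> pos A x \<le> pos A y \<longleftrightarrow> x \<le> y"
  by (metis leD le_less_linear order.order_iff_strict pos_strict_mono)

lemma pos_inject: "finite A \<Longrightarrow> x \<in> A \<Longrightarrow> y \<in> A \<Longrightarrow> pos A x = pos A y \<longleftrightarrow> x = y"
  by (metis order_antisym order_refl pos_le_pos_iff)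

lemma incr_bij_eq: "incr_bij A B x = sorted_list_of_set B ! pos A x"
  unfolding incr_bij_def pos_def ..

lemma pos_superset_eq: "A \<subseteq> B \<Longrightarrow> (\<And>y. y \<in> B \<Longrightarrow> y < x \<Longrightarrow> y \<in> A) \<Longrightarrow> pos B x = pos A x"
  unfolding pos_def by (metis (mono_tags, lifting) Collect_cong subsetD)

lemma pos_sorted_list_of_set_nth:
  assumes "finite A" "i < card A"
  shows "pos A (sorted_list_of_set A ! i) = i"
proof -
  define xs where "xs = sorted_list_of_set A"
  have xs: "sorted_wrt (<) xs" "distinct xs" "set xs = A" "length xs = card A"
    using assms(1) unfolding xs_def by auto
  have less_iff: "xs ! j < xs ! i \<longleftrightarrow> j < i" if "j < length xs" for j
    using that assms(2) xs(4) sorted_wrt_nth_less[OF xs(1), of j i] sorted_wrt_nth_less[OF xs(1), of i j]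
    by (cases j i rule: linorder_cases) auto
  have "{y\<in>A. y < xs ! i} = (!) xs ` {..<i}"
  proof (intro set_eqI iffI)
    fix y assume "y \<in> {y\<in>A. y < xs ! i}"
    then obtain j where "j < length xs" "y = xs ! j" "y < xs ! i"
      using xs(3) by (auto simp: in_set_conv_nth)
    then show "y \<in> (!) xs ` {..<i}"
      using less_iff by auto
  next
    fix y assume "y \<in> (!) xs ` {..<i}"
    then obtain j where "j < i" "y = xs ! j"
      by auto
    then show "y \<in> {y\<in>A. y < xs ! i}"
      using less_iff[of j] assms(2) xs(3,4) by auto
  qed
  moreover have "inj_on ((!) xs) {..<i}"
    using xs(2,4) assms(2) by (simp add: inj_on_nth)
  ultimately show ?thesis
    unfolding pos_def xs_def[symmetric] by (simp add: card_image)
qed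

lemma init_seg_Un: "init_seg A E \<Longrightarrow> init_seg B E \<Longrightarrow> init_seg (A \<union> B) E"
  unfolding init_seg_def by blast

lemma rank_ge_imp_mem: "rank_ge F k A \<Longrightarrow> A \<in> F"
  by (cases k) auto

lemma rank_ge_Suc_imp: "rank_ge F (Suc k) A \<Longrightarrow> rank_ge F k A"
  by (induction k arbitrary: A) auto

lemma rank_ge_antimono: "k \<le> j \<Longrightarrow> rank_ge F j A \<Longrightarrow> rank_ge F k A"
  by (induction j rule: dec_induct) (use rank_ge_Suc_imp in blast)+

lemma rank_ge_le_card: "(\<And>B. B \<in> F \<Longrightarrow> finite B) \<Longrightarrow> rank_ge F k A \<Longrightarrow> k \<le> card A"
proof (induction k arbitrary: A)
  case (Suc k)
  then obtain B where "rank_ge F k B" "B \<subset> A" "A \<in> F"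
    by auto
  then show ?case
    using Suc psubset_card_mono[of A B] by fastforce
qed simp

lemma ex_level:
  assumes "\<And>B. B \<in> F \<Longrightarrow> finite B" "A \<in> F"
  shows "\<exists>k. A \<in> level F k"
proof (rule ccontr)
  assume "\<nexists>k. A \<in> level F k"
  then have "rank_ge F k A" for k
    using assms(2) by (induction k) (auto simp: level_def)
  then show False
    using rank_ge_le_card[of F "Suc (card A)" A] assms(1) by fastforce
qed

lemma level_imp_mem: "A \<in> level F k \<Longrightarrow> A \<in> F"
  unfolding level_def using rank_ge_imp_mem by blast

lemma level_unique:
  assumes "A \<in> level F k" "A \<in> level F j"
  shows "k = j"
proof (rule ccontr)
  assume "k \<noteq> j"
  then have "Suc k \<le> j \<or> Suc j \<le> k"
    by arith
  then show False
    using assms rank_ge_antimono unfolding level_def by blast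
qed

lemma level_less_of_psubset:
  assumes "A \<in> level F k" "B \<in> level F j" "A \<subset> B"
  shows "k < j"
proof (rule ccontr)
  assume "\<not> k < j"
  then have "Suc j \<le> Suc k"
    by simp
  moreover have "rank_ge F (Suc k) B"
    using assms level_imp_mem[OF assms(2)] unfolding level_def by auto
  ultimately have "rank_ge F (Suc j) B"
    by (rule rank_ge_antimono)
  then show False
    using assms(2) unfolding level_def by blast
qed

lemma level_le_of_subset:
  assumes "A \<in> level F k" "B \<in> level F j" "A \<subseteq> B"
  shows "k \<le> j"
proof (cases "A = B")
  case True
  then show ?thesis
    using assms level_unique by blast
next
  case False
  then have "A \<subset> B"
    using assms(3) by blast
  with assms(1,2) have "k < j"
    by (rule level_less_of_psubset)
  then show ?thesis
    by simp
qed

locale cscheme =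
  fixes X :: "'a::linorder set" and m n r :: "nat \<Rightarrow> nat" and F :: "'a set set"
  assumes construction_scheme: "construction_scheme X m n r F"
begin

lemma finite_mem: "A \<in> F \<Longrightarrow> finite A"
  using construction_scheme by (simp add: construction_scheme_def)

lemma finite_level: "A \<in> level F k \<Longrightarrow> finite A"
  using finite_mem level_imp_mem by blast

lemma card_level: "A \<in> level F k \<Longrightarrow> card A = m k"
  using construction_scheme by (simp add: construction_scheme_def)

lemma init_seg_Int_level: "E \<in> level F k \<Longrightarrow> G \<in> level F k \<Longrightarrow> init_seg (E \<inter> G) E"
  using construction_scheme by (simp add: construction_scheme_def)

lemma ex_level_superset:
  assumes "finite A" "A \<subseteq> X"
  shows "\<exists>k E. E \<in> level F k \<and> A \<subseteq> E"
proof -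
  have "\<forall>A. finite A \<and> A \<subseteq> X \<longrightarrow> (\<exists>E\<in>F. A \<subseteq> E)"
    using construction_scheme unfolding construction_scheme_def by (elim conjE) assumption
  then obtain E where "E \<in> F" "A \<subseteq> E"
    using assms by blast
  then show ?thesis
    using ex_level[OF finite_mem] by blast
qed

lemma decomp_blocks:
  assumes "G \<in> level F (Suc k)"
  shows "decomp F n r k G (blocks F n r k G)"
proof -
  have "\<exists>!Fs. decomp F n r k G Fs"
    using construction_scheme assms by (simp add: construction_scheme_def)
  then show ?thesis
    unfolding blocks_def by (rule theI')
qed

lemma pos_level_eq:
  assumes "E \<in> level F k" "E' \<in> level F k" "x \<in> E" "x \<in> E'"
  shows "pos E x = pos E' x"
proof -
  have "init_seg (E \<inter> E') E" "init_seg (E' \<inter> E) E'"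
    using assms(1,2) by (auto intro: init_seg_Int_level)
  then have "{y\<in>E. y < x} = {y\<in>E'. y < x}"
    using assms(3,4) unfolding init_seg_def by blast
  then show ?thesis
    unfolding pos_def by simp
qed

end

section \<open>Positions in binary construction schemes\<close>

locale binary_type =
  fixes m r :: "nat \<Rightarrow> nat"
  assumes is_type: "is_type m (\<lambda>_. 2) r"
begin

lemma r_less_m: "r (Suc k) < m k"
  using is_type unfolding is_type_def by (elim conjE) blast

lemma m_Suc: "m (Suc k) = 2 * m k - r (Suc k)"
proof -
  have "m (Suc k) = r (Suc k) + (m k - r (Suc k)) * 2"
    using is_type unfolding is_type_def by (elim conjE) blast
  then show ?thesis
    using r_less_m[of k] by simp
qed

text \<open>In a member of level K+1 with blocks B0, B1 and root R, the points of B0 occupy the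
  positions below m K, and those of B1 the positions below r (K+1) (the root) and from m K on.
  lift K i maps the position of a point in Bi to its position in the whole set; unlift maps it
  back, reading root positions in B0.\<close>

definition lift :: "nat \<Rightarrow> nat \<Rightarrow> nat \<Rightarrow> nat" where
  "lift K i p = (if i = 0 \<or> p < r (Suc K) then p else p + (m K - r (Suc K)))"

definition unlift :: "nat \<Rightarrow> nat \<Rightarrow> nat" where
  "unlift K p = (if p < m K then p else p - (m K - r (Suc K)))"

definition in_blk :: "nat \<Rightarrow> nat \<Rightarrow> nat \<Rightarrow> bool" where
  "in_blk K i p \<longleftrightarrow> (if i = 0 then p < m K else p < r (Suc K) \<or> m K \<le> p)"

definition same_blk :: "nat \<Rightarrow> nat \<Rightarrow> nat \<Rightarrow> bool" where
  "same_blk K p q \<longleftrightarrow> (in_blk K 0 p \<and> in_blk K 0 q) \<or> (in_blk K 1 p \<and> in_blk K 1 q)"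

text \<open>pos_near K k p q: descending from a member of level K through the blocks, the points at
  positions p \<le> q lie in a common block at every level below k, until they coincide.\<close>

fun pos_near :: "nat \<Rightarrow> nat \<Rightarrow> nat \<Rightarrow> nat \<Rightarrow> bool" where
  "pos_near 0 k p q \<longleftrightarrow> p = q"
| "pos_near (Suc K) k p q \<longleftrightarrow>
     p = q \<or> (p < q \<and> (same_blk K p q \<or> k \<le> K) \<and> pos_near K k (unlift K p) (unlift K q))"

text \<open>lift_chain K0 K U: U is the composite of the lifts along a descent from level K to K0,
  i.e. the position map from a member of level K0 into a member of level K containing it.\<close>

inductive lift_chain :: "nat \<Rightarrow> nat \<Rightarrow> (nat \<Rightarrow> nat) \<Rightarrow> bool" where
  lift_chain_id: "lift_chain K K id"
| lift_chain_step: "lift_chain K0 K U \<Longrightarrow> i < 2 \<Longrightarrow> lift_chain K0 (Suc K) (lift K i \<circ> U)"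

lemma lift_less_m: "p < m K \<Longrightarrow> lift K i p < m (Suc K)"
  using r_less_m[of K] m_Suc[of K] unfolding lift_def by auto

lemma unlift_lift: "p < m K \<Longrightarrow> unlift K (lift K i p) = p"
  using r_less_m[of K] unfolding lift_def unlift_def by auto

lemma in_blk_lift: "p < m K \<Longrightarrow> i < 2 \<Longrightarrow> in_blk K i (lift K i p)"
  using r_less_m[of K] unfolding lift_def in_blk_def by auto

lemma lift_strict_mono: "p < q \<Longrightarrow> lift K i p < lift K i q"
  using r_less_m[of K] unfolding lift_def by auto

lemma lift_mono: "p \<le> q \<Longrightarrow> lift K i p \<le> lift K i q"
  using lift_strict_mono[of p q K i] by (cases "p = q") auto

lemma in_blk_downward: "w < x \<Longrightarrow> same_blk K w x \<Longrightarrow> i < 2 \<Longrightarrow> in_blk K i x \<Longrightarrow> in_blk K i w"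
  unfolding same_blk_def in_blk_def using r_less_m[of K] by (cases "i = 0") auto

lemma same_blkI: "in_blk K i w \<Longrightarrow> in_blk K i x \<Longrightarrow> i < 2 \<Longrightarrow> same_blk K w x"
  unfolding same_blk_def by (cases "i = 0") (auto simp: less_2_cases_iff)

lemma unlift_inj: "same_blk K w q \<Longrightarrow> unlift K w = unlift K q \<Longrightarrow> w = q"
  unfolding same_blk_def in_blk_def unlift_def using r_less_m[of K] by (auto split: if_splits)

lemma pos_near_refl: "pos_near K k p p"
  by (cases K) auto

lemma pos_near_le: "pos_near K k p q \<Longrightarrow> p \<le> q"
  by (cases K) auto

lemma pos_near_Suc: "pos_near K (Suc k) p q \<Longrightarrow> pos_near K k p q"
  by (induction K arbitrary: p q) auto

lemma pos_near_imp_eq: "K \<le> k \<Longrightarrow> pos_near K k w q \<Longrightarrow> w = q"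
proof (induction K arbitrary: w q)
  case (Suc K)
  show ?case
  proof (rule ccontr)
    assume "w \<noteq> q"
    then have "same_blk K w q" "pos_near K k (unlift K w) (unlift K q)"
      using Suc.prems by auto
    then show False
      using Suc.IH Suc.prems(1) unlift_inj \<open>w \<noteq> q\<close> by simp
  qed
qed simp

lemma pos_near_lift:
  assumes "p < m K" "q < m K" "i < 2"
  shows "pos_near (Suc K) k (lift K i p) (lift K i q) \<longleftrightarrow> pos_near K k p q"
proof (cases p q rule: linorder_cases)
  case less
  have "same_blk K (lift K i p) (lift K i q)"
    using in_blk_lift assms same_blkI by blast
  moreover have "lift K i p < lift K i q"
    using less by (rule lift_strict_mono)
  ultimately show ?thesis
    using less unlift_lift assms(1,2) by (simp add: less_imp_neq)
next
  case greater
  moreover have "lift K i q < lift K i p"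
    using greater by (rule lift_strict_mono)
  ultimately show ?thesis
    using pos_near_le[of "Suc K" k "lift K i p" "lift K i q"] pos_near_le[of K k p q] by auto
qed (simp add: pos_near_refl)

lemma pos_near_lift_0_1: "p < m K \<Longrightarrow> k \<le> K \<Longrightarrow> pos_near (Suc K) k p (lift K 1 p)"
  using r_less_m[of K] unlift_lift[of p K 1] pos_near_refl[of K k p]
  by (auto simp: lift_def unlift_def)

lemma lift_chain_less_m: "lift_chain K0 K U \<Longrightarrow> p < m K0 \<Longrightarrow> U p < m K"
  by (induction rule: lift_chain.induct) (auto intro: lift_less_m)

lemma pos_near_lift_chain:
  "lift_chain K0 K U \<Longrightarrow> p < m K0 \<Longrightarrow> q < m K0 \<Longrightarrow> pos_near K k (U p) (U q) \<longleftrightarrow> pos_near K0 k p q"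
proof (induction rule: lift_chain.induct)
  case (lift_chain_step K0 K U i)
  then show ?case
    using lift_chain_less_m pos_near_lift[of "U p" K "U q" i k] by simp
qed simp

lemma pos_near_lift_chain_trans:
  "lift_chain K0 K U \<Longrightarrow> p < m K0 \<Longrightarrow> q < m K0 \<Longrightarrow> K0 \<le> j \<Longrightarrow> k \<le> j \<Longrightarrow>
    pos_near K0 k q p \<Longrightarrow> pos_near K j w (U q) \<Longrightarrow> pos_near K k w (U p)"
proof (induction arbitrary: w rule: lift_chain.induct)
  case (lift_chain_id K)
  then show ?case
    using pos_near_imp_eq[of K j w q] by simp
next
  case (lift_chain_step K0 K U i)
  define a where "a = U q"
  define b where "b = U p"
  have ab: "a < m K" "b < m K"
    unfolding a_def b_def using lift_chain_less_m lift_chain_step by auto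
  have near_ab: "pos_near K k a b"
    unfolding a_def b_def using pos_near_lift_chain lift_chain_step by simp
  have near_w: "pos_near (Suc K) j w (lift K i a)"
    using lift_chain_step.prems unfolding a_def by simp
  show ?case
    unfolding b_def[symmetric] comp_def
  proof (cases "w = lift K i a")
    case True
    then show "pos_near (Suc K) k w (lift K i b)"
      using pos_near_lift ab lift_chain_step.hyps(2) near_ab by simp
  next
    case False
    then have w: "w < lift K i a" "same_blk K w (lift K i a) \<or> j \<le> K" "pos_near K j (unlift K w) a"
      using near_w unlift_lift[OF ab(1)] by auto
    have IH: "pos_near K k (unlift K w) b"
      using lift_chain_step.IH lift_chain_step.prems w(3) unfolding a_def b_def by simp
    have "w < lift K i b"
      using w(1) lift_mono[OF pos_near_le[OF near_ab], of K i] by simp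
    moreover have "same_blk K w (lift K i b) \<or> k \<le> K"
    proof (cases "j \<le> K")
      case False
      then have "in_blk K i w"
        using w(1,2) in_blk_downward in_blk_lift ab lift_chain_step.hyps(2) by blast
      then show ?thesis
        using same_blkI in_blk_lift ab lift_chain_step.hyps(2) by blast
    qed (use lift_chain_step.prems in simp)
    ultimately show "pos_near (Suc K) k w (lift K i b)"
      using IH unlift_lift[OF ab(2)] by simp
  qed
qed

lemma not_pos_near_lift_chain_trans:
  "lift_chain K0 K U \<Longrightarrow> p < m K0 \<Longrightarrow> q < m K0 \<Longrightarrow> K0 \<le> j \<Longrightarrow>
    \<not> pos_near K0 k q p \<Longrightarrow> pos_near K j w (U q) \<Longrightarrow> \<not> pos_near K k w (U p)"
proof (induction arbitrary: w rule: lift_chain.induct)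
  case (lift_chain_id K)
  then show ?case
    using pos_near_imp_eq[of K j w q] by simp
next
  case (lift_chain_step K0 K U i)
  define a where "a = U q"
  define b where "b = U p"
  have ab: "a < m K" "b < m K"
    unfolding a_def b_def using lift_chain_less_m lift_chain_step by auto
  have not_near_ab: "\<not> pos_near K k a b"
    unfolding a_def b_def using pos_near_lift_chain lift_chain_step by simp
  have near_w: "pos_near (Suc K) j w (lift K i a)"
    using lift_chain_step.prems unfolding a_def by simp
  show ?case
    unfolding b_def[symmetric] comp_def
  proof (cases "w = lift K i a")
    case True
    then show "\<not> pos_near (Suc K) k w (lift K i b)"
      using pos_near_lift ab lift_chain_step.hyps(2) not_near_ab by simp
  next
    case False
    then have w: "pos_near K j (unlift K w) a"
      using near_w unlift_lift[OF ab(1)] by auto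
    have IH: "\<not> pos_near K k (unlift K w) b"
      using lift_chain_step.IH lift_chain_step.prems w unfolding a_def b_def by simp
    show "\<not> pos_near (Suc K) k w (lift K i b)"
    proof
      assume "pos_near (Suc K) k w (lift K i b)"
      then have "w = lift K i b"
        using IH unlift_lift[OF ab(2)] by auto
      then have "pos_near K j b a"
        using w unlift_lift[OF ab(2)] by simp
      then have "\<not> pos_near K k b b"
        using lift_chain_step.IH lift_chain_step.prems unfolding a_def b_def by simp
      then show False
        using pos_near_refl by simp
    qed
  qed
qed

end

section \<open>The neighbourhood system of a 2-capturing binary scheme\<close>

locale binary_cscheme = binary_type m r + cscheme "UNIV :: 'a::linorder set" m "\<lambda>_. 2" r F
  for m r :: "nat \<Rightarrow> nat" and F :: "'a::linorder set set"
begin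

abbreviation blk :: "nat \<Rightarrow> 'a set \<Rightarrow> nat \<Rightarrow> 'a set" where
  "blk k G i \<equiv> blocks F (\<lambda>_. 2) r k G ! i"

abbreviation rt :: "nat \<Rightarrow> 'a set \<Rightarrow> 'a set" where
  "rt k G \<equiv> root F (\<lambda>_. 2) r k G"

lemma rt_eq: "rt k G = blk k G 0 \<inter> blk k G 1"
  by (simp add: root_def)

lemma
  assumes "G \<in> level F (Suc k)"
  shows blk_level: "i < 2 \<Longrightarrow> blk k G i \<in> level F k"
    and Un_blk: "G = blk k G 0 \<union> blk k G 1"
    and card_rt: "card (rt k G) = r (Suc k)"
    and rt_less_blk0: "set_less (rt k G) (blk k G 0 - rt k G)"
    and blk0_less_blk1: "set_less (blk k G 0 - rt k G) (blk k G 1 - rt k G)"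
proof -
  define Fs where "Fs = blocks F (\<lambda>_. 2) r k G"
  have "decomp F (\<lambda>_. 2) r k G Fs"
    unfolding Fs_def using assms by (rule decomp_blocks)
  then obtain R where len: "length Fs = 2" and lev: "\<forall>i<2. Fs ! i \<in> level F k"
    and G_eq: "G = \<Union>(set Fs)" and card_R: "card R = r (Suc k)"
    and R_eq: "Fs ! 0 \<inter> Fs ! 1 = R" and less_0: "set_less R (Fs ! 0 - R)"
    and less_1: "set_less (Fs ! 0 - R) (Fs ! 1 - R)"
    unfolding decomp_def by (metis One_nat_def lessI numeral_2_eq_2 zero_less_Suc zero_neq_one)
  obtain a b where ab: "Fs = [a, b]"
    using len by (metis One_nat_def Suc_1 length_0_conv length_Suc_conv)
  have rt_R: "rt k G = R"
    using R_eq unfolding rt_eq Fs_def by simp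
  show "i < 2 \<Longrightarrow> blk k G i \<in> level F k"
    using lev unfolding Fs_def by blast
  show "G = blk k G 0 \<union> blk k G 1"
    using G_eq unfolding Fs_def[symmetric] ab by simp
  show "card (rt k G) = r (Suc k)"
    using card_R rt_R by simp
  show "set_less (rt k G) (blk k G 0 - rt k G)"
    using less_0 rt_R unfolding Fs_def by simp
  show "set_less (blk k G 0 - rt k G) (blk k G 1 - rt k G)"
    using less_1 rt_R unfolding Fs_def by simp
qed

lemma rt_subset_blk: "rt k G \<subseteq> blk k G 0" "rt k G \<subseteq> blk k G 1"
  unfolding rt_eq by auto

lemma pos_less_m: "E \<in> level F K \<Longrightarrow> x \<in> E \<Longrightarrow> pos E x < m K"
  using pos_less_card finite_level card_level by metis

lemma blk0_minus_rt_nonempty: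
  assumes "G \<in> level F (Suc k)"
  shows "blk k G 0 - rt k G \<noteq> {}"
proof
  assume "blk k G 0 - rt k G = {}"
  moreover have "finite (rt k G)"
    using finite_level[OF blk_level[OF assms]] rt_subset_blk(1) finite_subset by fastforce
  ultimately have "card (blk k G 0) \<le> card (rt k G)"
    by (intro card_mono) auto
  then show False
    using card_level[OF blk_level[OF assms]] card_rt[OF assms] r_less_m[of k] by simp
qed

lemma rt_less_blk1:
  assumes "G \<in> level F (Suc k)"
  shows "set_less (rt k G) (blk k G 1 - rt k G)"
proof -
  obtain c where "c \<in> blk k G 0 - rt k G"
    using blk0_minus_rt_nonempty[OF assms] by blast
  then show ?thesis
    using rt_less_blk0[OF assms] blk0_less_blk1[OF assms] unfolding set_less_def
    by (meson order.strict_trans)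
qed

lemma init_seg_Int_level_le:
  "E \<in> level F K \<Longrightarrow> G \<in> level F L \<Longrightarrow> K \<le> L \<Longrightarrow> init_seg (E \<inter> G) E"
proof (induction L arbitrary: G)
  case 0
  then show ?case
    using init_seg_Int_level by simp
next
  case (Suc L)
  show ?case
  proof (cases "K = Suc L")
    case True
    then show ?thesis
      using init_seg_Int_level Suc.prems by blast
  next
    case False
    then have "K \<le> L"
      using Suc.prems by simp
    then have "init_seg (E \<inter> blk L G 0) E" "init_seg (E \<inter> blk L G 1) E"
      using Suc.IH[OF Suc.prems(1)] blk_level[OF Suc.prems(2)] by auto
    then have "init_seg (E \<inter> blk L G 0 \<union> E \<inter> blk L G 1) E"
      by (rule init_seg_Un)
    moreover have "E \<inter> G = E \<inter> blk L G 0 \<union> E \<inter> blk L G 1"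
      using Un_blk[OF Suc.prems(2)] by blast
    ultimately show ?thesis
      by simp
  qed
qed

text \<open>By coherence E \<inter> blk L G 1 is an initial segment of E, so E cannot contain points of
  both blocks outside the root, those of the first block being smaller.\<close>

lemma ex_blk_superset:
  assumes E: "E \<in> level F K" and G: "G \<in> level F (Suc L)" and "K \<le> L" "E \<subseteq> G"
  shows "\<exists>i<2. E \<subseteq> blk L G i"
proof (rule ccontr)
  assume "\<not> (\<exists>i<2. E \<subseteq> blk L G i)"
  then obtain a c where ac: "a \<in> E" "a \<notin> blk L G 1" "c \<in> E" "c \<notin> blk L G 0"
    by (metis One_nat_def lessI subsetI zero_less_Suc numeral_2_eq_2)
  have "a \<in> blk L G 0 - rt L G" "c \<in> blk L G 1 - rt L G"
    using ac assms(4) Un_blk[OF G] rt_subset_blk by blast+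
  then have "a < c"
    using blk0_less_blk1[OF G] unfolding set_less_def by blast
  moreover have "init_seg (E \<inter> blk L G 1) E"
    using init_seg_Int_level_le[OF E blk_level[OF G] assms(3)] by simp
  ultimately have "a \<in> blk L G 1"
    using ac \<open>c \<notin> blk L G 0\<close> \<open>c \<in> blk L G 1 - rt L G\<close> unfolding init_seg_def by blast
  then show False
    using ac by blast
qed

lemma pos_blk0:
  assumes G: "G \<in> level F (Suc K)" and x: "x \<in> blk K G 0"
  shows "pos G x = pos (blk K G 0) x"
proof (rule pos_superset_eq)
  show "blk K G 0 \<subseteq> G"
    using Un_blk[OF G] by blast
  fix y assume "y \<in> G" "y < x"
  have "x < z" if "z \<in> blk K G 1 - rt K G" for z
    using that x rt_less_blk1[OF G] blk0_less_blk1[OF G] unfolding set_less_def by blast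
  then show "y \<in> blk K G 0"
    using \<open>y \<in> G\<close> \<open>y < x\<close> Un_blk[OF G] rt_subset_blk by fastforce
qed

lemma pos_rt:
  assumes G: "G \<in> level F (Suc K)" and x: "x \<in> rt K G"
  shows "pos G x = pos (blk K G 1) x" "pos (blk K G 1) x < r (Suc K)"
proof -
  show "pos G x = pos (blk K G 1) x"
  proof (rule pos_superset_eq)
    show "blk K G 1 \<subseteq> G"
      using Un_blk[OF G] by blast
    fix y assume y: "y \<in> G" "y < x"
    have "y \<notin> blk K G 0 - rt K G"
    proof
      assume "y \<in> blk K G 0 - rt K G"
      then have "x < y"
        using x rt_less_blk0[OF G] unfolding set_less_def by blast
      then show False
        using y(2) by simp
    qed
    then show "y \<in> blk K G 1"
      using y(1) Un_blk[OF G] rt_subset_blk(2) by blast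
  qed
  have "{y\<in>blk K G 1. y < x} \<subseteq> rt K G - {x}"
  proof
    fix y assume y: "y \<in> {y\<in>blk K G 1. y < x}"
    have "y \<in> rt K G"
    proof (rule ccontr)
      assume "y \<notin> rt K G"
      then have "x < y"
        using x y rt_less_blk1[OF G] unfolding set_less_def by blast
      then show False
        using y less_not_sym by blast
    qed
    then show "y \<in> rt K G - {x}"
      using y by (auto simp: less_imp_neq)
  qed
  moreover have "finite (rt K G)"
    using finite_level[OF blk_level[OF G]] rt_subset_blk(1) finite_subset by fastforce
  ultimately have "pos (blk K G 1) x < card (rt K G)"
    unfolding pos_def using x by (meson card_Diff1_less card_mono finite_Diff le_less_trans)
  then show "pos (blk K G 1) x < r (Suc K)"
    using card_rt[OF G] by simp
qed

lemma pos_blk1_minus_rt: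
  assumes G: "G \<in> level F (Suc K)" and x: "x \<in> blk K G 1 - rt K G"
  shows "pos G x = pos (blk K G 1) x + (m K - r (Suc K))" "r (Suc K) \<le> pos (blk K G 1) x"
proof -
  have fin: "finite (blk K G 0)" "finite (blk K G 1)"
    using finite_level[OF blk_level[OF G]] by auto
  have "{y\<in>G. y < x} = (blk K G 0 - rt K G) \<union> {y\<in>blk K G 1. y < x}"
    using x Un_blk[OF G] blk0_less_blk1[OF G] rt_subset_blk unfolding set_less_def by blast
  moreover have "card (blk K G 0 - rt K G) = m K - r (Suc K)"
    using card_Diff_subset[OF finite_subset[OF rt_subset_blk(1) fin(1)] rt_subset_blk(1)]
      card_level[OF blk_level[OF G]] card_rt[OF G] by simp
  moreover have "(blk K G 0 - rt K G) \<inter> {y\<in>blk K G 1. y < x} = {}"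
    unfolding rt_eq by blast
  ultimately show "pos G x = pos (blk K G 1) x + (m K - r (Suc K))"
    unfolding pos_def using fin by (simp add: card_Un_disjoint)
  have "rt K G \<subseteq> {y\<in>blk K G 1. y < x}"
    using x rt_subset_blk(2) rt_less_blk1[OF G] unfolding set_less_def by blast
  then have "card (rt K G) \<le> pos (blk K G 1) x"
    unfolding pos_def using fin(2) by (intro card_mono) auto
  then show "r (Suc K) \<le> pos (blk K G 1) x"
    using card_rt[OF G] by simp
qed

lemma pos_blk:
  assumes G: "G \<in> level F (Suc K)" and "i < 2" "x \<in> blk K G i"
  shows "pos G x = lift K i (pos (blk K G i) x)"
proof -
  consider "i = 0" | "i = 1" "x \<in> rt K G" | "i = 1" "x \<notin> rt K G"
    using assms(2) by linarith
  then show ?thesis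
  proof cases
    case 1
    then show ?thesis
      using pos_blk0[OF G] assms(3) by (simp add: lift_def)
  next
    case 2
    then show ?thesis
      using pos_rt[OF G] by (simp add: lift_def)
  next
    case 3
    then have "x \<in> blk K G 1 - rt K G"
      using assms(3) by simp
    from pos_blk1_minus_rt[OF G this] show ?thesis
      using 3 by (simp add: lift_def)
  qed
qed

lemma ex_lift_chain:
  "E \<in> level F K0 \<Longrightarrow> G \<in> level F K \<Longrightarrow> E \<subseteq> G \<Longrightarrow>
    \<exists>U. lift_chain K0 K U \<and> (\<forall>x\<in>E. pos G x = U (pos E x))"
proof (induction K arbitrary: G)
  case 0
  then have "K0 = 0"
    using level_le_of_subset by blast
  have "\<forall>x\<in>E. pos G x = id (pos E x)"
    using 0 \<open>K0 = 0\<close> pos_level_eq[of G 0 E] by auto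
  then show ?case
    using lift_chain_id[of 0] unfolding \<open>K0 = 0\<close> by blast
next
  case (Suc K)
  show ?case
  proof (cases "K0 = Suc K")
    case True
    have "\<forall>x\<in>E. pos G x = id (pos E x)"
      using Suc.prems True pos_level_eq[of G K0 E] by auto
    then show ?thesis
      using lift_chain_id[of K0] unfolding True by blast
  next
    case False
    then have "K0 \<le> K"
      using level_le_of_subset[OF Suc.prems] by simp
    then obtain i where i: "i < 2" "E \<subseteq> blk K G i"
      using ex_blk_superset Suc.prems by blast
    then obtain U where U: "lift_chain K0 K U" "\<forall>x\<in>E. pos (blk K G i) x = U (pos E x)"
      using Suc.IH[OF Suc.prems(1) blk_level[OF Suc.prems(2) i(1)]] by blast
    have "lift_chain K0 (Suc K) (lift K i \<circ> U)"
      using U(1) i(1) by (rule lift_chain_step)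
    moreover have "\<forall>x\<in>E. pos G x = (lift K i \<circ> U) (pos E x)"
      using U(2) pos_blk[OF Suc.prems(2) i(1)] i(2) by auto
    ultimately show ?thesis
      by blast
  qed
qed

lemma pos_near_subset:
  assumes "E \<in> level F K0" "G \<in> level F K" "E \<subseteq> G" "y \<in> E" "x \<in> E"
  shows "pos_near K k (pos G y) (pos G x) \<longleftrightarrow> pos_near K0 k (pos E y) (pos E x)"
proof -
  obtain U where "lift_chain K0 K U" "\<forall>x\<in>E. pos G x = U (pos E x)"
    using ex_lift_chain[OF assms(1-3)] by blast
  then show ?thesis
    using pos_near_lift_chain pos_less_m[OF assms(1)] assms(4,5) by simp
qed

definition near :: "nat \<Rightarrow> 'a \<Rightarrow> 'a \<Rightarrow> bool" where
  "near k y x \<longleftrightarrow> (\<exists>K E. E \<in> level F K \<and> y \<in> E \<and> x \<in> E \<and> pos_near K k (pos E y) (pos E x))"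

lemma near_iff:
  assumes "E \<in> level F K" "y \<in> E" "x \<in> E"
  shows "near k y x \<longleftrightarrow> pos_near K k (pos E y) (pos E x)"
proof
  assume "near k y x"
  then obtain K' E' where E': "E' \<in> level F K'" "y \<in> E'" "x \<in> E'"
    and near': "pos_near K' k (pos E' y) (pos E' x)"
    unfolding near_def by blast
  have "finite (E \<union> E')"
    using finite_level assms(1) E'(1) by blast
  then obtain L G where G: "G \<in> level F L" "E \<union> E' \<subseteq> G"
    using ex_level_superset by blast
  then show "pos_near K k (pos E y) (pos E x)"
    using pos_near_subset[OF assms(1) G(1) _ assms(2,3)] pos_near_subset[OF E'(1) G(1) _ E'(2,3)] near'
    by simp
next
  assume "pos_near K k (pos E y) (pos E x)"
  then show "near k y x"
    unfolding near_def using assms by blast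
qed

lemma ex_common_level: "\<exists>K E. E \<in> level F K \<and> y \<in> E \<and> x \<in> E"
  using ex_level_superset[of "{y, x}"] by simp

lemma near_refl: "near k x x"
  using ex_common_level[of x x] pos_near_refl unfolding near_def by blast

lemma near_le: "near k y x \<Longrightarrow> y \<le> x"
  unfolding near_def using pos_near_le pos_le_pos_iff finite_level by blast

lemma near_Suc: "near (Suc k) y x \<Longrightarrow> near k y x"
  unfolding near_def using pos_near_Suc by blast

lemma near_separating:
  assumes "y \<noteq> x"
  shows "\<exists>k. \<not> near k y x"
proof -
  obtain K E where E: "E \<in> level F K" "y \<in> E" "x \<in> E"
    using ex_common_level by blast
  have "\<not> pos_near K K (pos E y) (pos E x)"
    using pos_near_imp_eq pos_inject[OF finite_level[OF E(1)] E(2,3)] assms by blast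
  then show ?thesis
    using near_iff[OF E] by blast
qed

lemma near_lift_chain:
  assumes "E0 \<in> level F K0" "y \<in> E0" "near j w y"
  obtains K G U where "G \<in> level F K" "E0 \<subseteq> G" "w \<in> G" "lift_chain K0 K U"
    "\<forall>x\<in>E0. pos G x = U (pos E0 x)" "pos_near K j (pos G w) (U (pos E0 y))"
proof -
  have "finite (insert w E0)"
    using finite_level[OF assms(1)] by simp
  then obtain K G where G: "G \<in> level F K" "insert w E0 \<subseteq> G"
    using ex_level_superset by blast
  then have sub: "E0 \<subseteq> G" "w \<in> G"
    by auto
  obtain U where U: "lift_chain K0 K U" "\<forall>x\<in>E0. pos G x = U (pos E0 x)"
    using ex_lift_chain[OF assms(1) G(1) sub(1)] by blast
  have "pos_near K j (pos G w) (pos G y)"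
    using near_iff[OF G(1) sub(2)] sub(1) assms(2,3) by blast
  then have "pos_near K j (pos G w) (U (pos E0 y))"
    using U(2) assms(2) by simp
  then show thesis
    by (rule that[OF G(1) sub U])
qed

lemma near_open:
  assumes "near k y x"
  shows "\<exists>j. \<forall>w. near j w y \<longrightarrow> near k w x"
proof -
  obtain K0 E0 where E0: "E0 \<in> level F K0" "y \<in> E0" "x \<in> E0"
    using ex_common_level by blast
  have near0: "pos_near K0 k (pos E0 y) (pos E0 x)"
    using near_iff[OF E0] assms by blast
  have "near k w x" if near_w: "near (max K0 k) w y" for w
  proof -
    obtain K G U where G: "G \<in> level F K" "E0 \<subseteq> G" "w \<in> G"
      and U: "lift_chain K0 K U" "\<forall>x\<in>E0. pos G x = U (pos E0 x)"
      and w: "pos_near K (max K0 k) (pos G w) (U (pos E0 y))"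
      by (rule near_lift_chain[OF E0(1,2) near_w])
    have "pos_near K k (pos G w) (U (pos E0 x))"
      using pos_near_lift_chain_trans[OF U(1) pos_less_m[OF E0(1,3)] pos_less_m[OF E0(1,2)]
          max.cobounded1 max.cobounded2 near0 w] .
    moreover have "x \<in> G" "pos G x = U (pos E0 x)"
      using G(2) E0(3) U(2) by auto
    ultimately show ?thesis
      using near_iff[OF G(1) G(3)] by simp
  qed
  then show ?thesis
    by blast
qed

lemma near_closed:
  assumes "\<not> near k y x"
  shows "\<exists>j. \<forall>w. near j w y \<longrightarrow> \<not> near k w x"
proof -
  obtain K0 E0 where E0: "E0 \<in> level F K0" "y \<in> E0" "x \<in> E0"
    using ex_common_level by blast
  have not_near0: "\<not> pos_near K0 k (pos E0 y) (pos E0 x)"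
    using near_iff[OF E0] assms by blast
  have "\<not> near k w x" if near_w: "near K0 w y" for w
  proof -
    obtain K G U where G: "G \<in> level F K" "E0 \<subseteq> G" "w \<in> G"
      and U: "lift_chain K0 K U" "\<forall>x\<in>E0. pos G x = U (pos E0 x)"
      and w: "pos_near K K0 (pos G w) (U (pos E0 y))"
      by (rule near_lift_chain[OF E0(1,2) near_w])
    have "\<not> pos_near K k (pos G w) (U (pos E0 x))"
      using not_pos_near_lift_chain_trans[OF U(1) pos_less_m[OF E0(1,3)] pos_less_m[OF E0(1,2)]
          order.refl not_near0 w] .
    moreover have "x \<in> G" "pos G x = U (pos E0 x)"
      using G(2) E0(3) U(2) by auto
    ultimately show ?thesis
      using near_iff[OF G(1) G(3)] by simp
  qed
  then show ?thesis
    by blast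
qed

lemma ex_captured_pair:
  assumes capturing: "n_capturing 2 (\<lambda>_. 2) r F" and Y: "uncountable Y"
  obtains L G y z where "k \<le> L" "G \<in> level F (Suc L)" "y \<in> Y" "z \<in> Y"
    "y \<in> blk L G 0 - rt L G" "z \<in> blk L G 1 - rt L G" "z = incr_bij (blk L G 0) (blk L G 1) y"
proof -
  define S where "S = (\<lambda>y. {y}) ` Y"
  have "S \<subseteq> {A. finite A}"
    unfolding S_def by auto
  moreover have "uncountable S"
    using Y countable_image_inj_on[of "\<lambda>y. {y}" Y] unfolding S_def by (auto simp: inj_on_def)
  ultimately have "\<exists>C l G. C \<subseteq> S \<and> finite C \<and> card C = 2 \<and> l > k \<and> G \<in> level F l \<and>
      captures F (\<lambda>_. 2) r l G C"
    using capturing[unfolded n_capturing_def, rule_format] by simp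
  then obtain C l G where C: "C \<subseteq> S" "card C = 2" "k < l"
    and capt_l: "captures F (\<lambda>_. 2) r l G C"
    by blast
  then obtain L where L: "l = Suc L" "k \<le> L"
    by (cases l) auto
  have capt: "captures F (\<lambda>_. 2) r (Suc L) G C"
    using capt_l L(1) by simp
  then have G: "G \<in> level F (Suc L)"
    unfolding captures_def by blast
  obtain cs where cs: "distinct cs" "set cs = C"
    and cs_blk: "\<forall>i<length cs. cs ! i \<subseteq> blk L G i \<and> cs ! i - rt L G \<noteq> {} \<and>
        incr_bij (blk L G 0) (blk L G i) ` (cs ! 0) = cs ! i"
    using capt unfolding captures_def Let_def by auto
  have len: "length cs = 2"
    using distinct_card[OF cs(1)] cs(2) C(2) by simp
  then have "cs ! 0 \<in> S" "cs ! 1 \<in> S"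
    using cs(2) C(1) nth_mem[of 0 cs] nth_mem[of 1 cs] by auto
  then obtain y z where y: "cs ! 0 = {y}" "y \<in> Y" and z: "cs ! 1 = {z}" "z \<in> Y"
    unfolding S_def by blast
  have "y \<in> blk L G 0 - rt L G" "z \<in> blk L G 1 - rt L G"
    "z = incr_bij (blk L G 0) (blk L G 1) y"
    using cs_blk[rule_format, of 0] cs_blk[rule_format, of 1] len y z by auto
  then show thesis
    using that[OF L(2) G y(2) z(2)] by blast
qed

lemma near_uncountable:
  assumes "n_capturing 2 (\<lambda>_. 2) r F" "uncountable Y"
  shows "\<exists>y\<in>Y. \<exists>z\<in>Y. y < z \<and> near k y z"
proof -
  obtain L G y z where L: "k \<le> L" and G: "G \<in> level F (Suc L)" and "y \<in> Y" "z \<in> Y"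
    and yz: "y \<in> blk L G 0 - rt L G" "z \<in> blk L G 1 - rt L G"
    "z = incr_bij (blk L G 0) (blk L G 1) y"
    by (rule ex_captured_pair[OF assms])
  define p where "p = pos (blk L G 0) y"
  have p: "p < m L"
    unfolding p_def using pos_less_m[OF blk_level[OF G]] yz(1) by simp
  have "pos (blk L G 1) z = p"
    using pos_sorted_list_of_set_nth[OF finite_level[OF blk_level[OF G]], of 1 p] p
      card_level[OF blk_level[OF G]] yz(3) unfolding p_def incr_bij_eq by simp
  then have pos_yz: "pos G y = p" "pos G z = lift L 1 p"
    using pos_blk[OF G, of 0 y] pos_blk[OF G, of 1 z] yz(1,2) unfolding p_def by (auto simp: lift_def)
  have "y \<in> G" "z \<in> G"
    using yz(1,2) Un_blk[OF G] by auto
  then have "near k y z \<longleftrightarrow> pos_near (Suc L) k (pos G y) (pos G z)"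
    by (rule near_iff[OF G])
  then have "near k y z"
    unfolding pos_yz using pos_near_lift_0_1[OF p L] by simp
  moreover have "y < z"
    using blk0_less_blk1[OF G] yz(1,2) unfolding set_less_def by blast
  ultimately show ?thesis
    using \<open>y \<in> Y\<close> \<open>z \<in> Y\<close> by blast
qed

end

text \<open>Every value is taken by r infinitely often, as prod_decode enumerates all pairs, and
  r (k+1) \<le> k < m k.\<close>

lemma ex_binary_type: "\<exists>m r. is_type m (\<lambda>_. 2) r"
proof -
  define r :: "nat \<Rightarrow> nat" where "r k = (case k of 0 \<Rightarrow> 0 | Suc j \<Rightarrow> fst (prod_decode j))" for k
  define m :: "nat \<Rightarrow> nat" where "m = rec_nat 1 (\<lambda>k mk. 2 * mk - r (Suc k))"
  have m_0: "m 0 = 1" and m_Suc: "m (Suc k) = 2 * m k - r (Suc k)" for k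
    by (simp_all add: m_def)
  have r_Suc_le: "r (Suc k) \<le> k" for k
  proof -
    obtain a b where ab: "prod_decode k = (a, b)"
      by (cases "prod_decode k")
    then have "prod_encode (a, b) = k"
      by (metis prod_decode_inverse)
    then show ?thesis
      unfolding r_def using ab le_prod_encode_1[of a b] by simp
  qed
  have m_ge: "Suc k \<le> m k" for k
  proof (induction k)
    case (Suc k)
    then show ?case
      using m_Suc[of k] r_Suc_le[of k] by simp
  qed (simp add: m_0)
  have "is_type m (\<lambda>_. 2) r"
    unfolding is_type_def
  proof (intro conjI allI impI)
    fix k :: nat
    show "r (Suc k) < m k"
      using r_Suc_le[of k] m_ge[of k] by simp
    then show "m (Suc k) = r (Suc k) + (m k - r (Suc k)) * 2"
      using m_Suc[of k] by simp
  next
    fix x :: nat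
    have "range (\<lambda>b. Suc (prod_encode (x, b))) \<subseteq> {k. k \<ge> 1 \<and> r k = x}"
      unfolding r_def by auto
    moreover have "infinite (range (\<lambda>b. Suc (prod_encode (x, b))))"
      by (rule range_inj_infinite) (auto simp: inj_def dest: inj_prod_encode[THEN injD])
    ultimately show "infinite {k. k \<ge> 1 \<and> r k = x}"
      using infinite_super by blast
  qed (simp_all add: m_0)
  then show ?thesis
    by blast
qed

theorem mainTheorem15:
  assumes "omega1_type TYPE('a::wellorder)"
    and "CA TYPE('a) 2"
  shows "\<exists>X :: 'a topology. first_countable X \<and> t1_space X \<and> regular_space X \<and>
           hereditarily separable_space X \<and> \<not> Lindelof_space X"
proof -
  obtain m r where type: "is_type m (\<lambda>_. 2) r"
    using ex_binary_type by blast
  then have "\<exists>F :: 'a set set. construction_scheme UNIV m (\<lambda>_. 2) r F \<and> n_capturing 2 (\<lambda>_. 2) r F"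
    using assms(2)[unfolded CA_def, rule_format, of m "\<lambda>_. 2" r] by simp
  then obtain F :: "'a set set" where F: "construction_scheme UNIV m (\<lambda>_. 2) r F"
    and capturing: "n_capturing 2 (\<lambda>_. 2) r F"
    by blast
  interpret binary_cscheme m r F
    using type F by unfold_locales
  interpret omega1_nbhd_system near
    by unfold_locales (fact assms(1) near_refl near_le near_Suc near_separating near_open
        near_closed near_uncountable[OF capturing])+
  show ?thesis
    by (rule ex_S_space)
qed

end
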